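(* Let $a,b>0$ with $\min(a,b)\ge 1$, let $s\in\mathbb{R}$ and let $\gamma>0$ be a constant. Then the function $$ g(x)=\gamma\left(\left(\tfrac{a}{2}\right)^2+\left(\tfrac{x}{2}\right)^2\right)^{\frac{a-1}{2}}\left(\left(\tfrac{b}{2}\right)^2+\left(\tfrac{s-x}{2}\right)^2\right)^{\frac{b-1}{2}}e^{-x\arctan\left(\frac{x}{a}\right)-(s-x)\arctan\left(\frac{s-x}{b}\right)},\quad x\in\mathbb{R}, $$ is log-concave on $\mathbb{R}$.
   Context: A positive function $g$ on $\mathbb{R}$ is log-concave if $\log g$ is concave. *)

theory Defs
  imports "HOL-Analysis.Analysis"
begin

definition log_concave :: "(real \<Rightarrow> real) \<Rightarrow> bool" where
  "log_concave g \<longleftrightarrow> (\<forall>x. g x > 0) \<and> concave_on UNIV (\<lambda>x. ln (g x))"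

end

theory Submission
  imports Defs
begin

text \<open>
  Writing \<open>\<phi>\<^sub>c(x) = x arctan (x/c) - (c - 1)/2 ln ((c/2)\<^sup>2 + (x/2)\<^sup>2)\<close>, the function
  is \<open>\<gamma> exp (- \<phi>\<^sub>a(x) - \<phi>\<^sub>b(s - x))\<close>, so it suffices that each \<open>\<phi>\<^sub>c\<close> is convex.
  Its second derivative is \<open>(c\<^sup>2 + c\<^sup>3 + (c - 1) x\<^sup>2) / (c\<^sup>2 + x\<^sup>2)\<^sup>2\<close>, which is
  nonnegative exactly when \<open>c \<ge> 1\<close>.
\<close>

definition arctan_potential :: "real \<Rightarrow> real \<Rightarrow> real" where
  "arctan_potential c x = x * arctan (x / c) - (c - 1) / 2 * ln ((c/2)^2 + (x/2)^2)"

lemma arctan_potential_has_derivative: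
  assumes "c > 0"
  shows "(arctan_potential c has_real_derivative arctan (x/c) + x / (c^2 + x^2)) (at x)"
proof -
  have pos: "c^2 + x^2 > 0"
    using assms by (simp add: add_pos_nonneg)
  have "((\<lambda>x. x * arctan (x / c)) has_real_derivative arctan (x/c) + c * x / (c^2 + x^2)) (at x)"
    using assms pos by (auto intro!: derivative_eq_intros simp: field_simps power2_eq_square)
  moreover have "((\<lambda>x. ln ((c/2)^2 + (x/2)^2)) has_real_derivative 2 * x / (c^2 + x^2)) (at x)"
    using pos by (auto intro!: derivative_eq_intros simp: field_simps power2_eq_square)
  ultimately have "(arctan_potential c has_real_derivative
      arctan (x/c) + c * x / (c^2 + x^2) - (c - 1) / 2 * (2 * x / (c^2 + x^2))) (at x)"
    unfolding arctan_potential_def[abs_def] by (intro DERIV_diff DERIV_cmult)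
  moreover have "c * x / D - (c - 1) / 2 * (2 * x / D) = x / D" if "D > 0" for D :: real
    using that by (simp add: field_simps)
  ultimately show ?thesis
    using pos by (simp add: algebra_simps)
qed

lemma arctan_potential_deriv_has_derivative:
  assumes "c > 0"
  shows "((\<lambda>x. arctan (x/c) + x / (c^2 + x^2)) has_real_derivative
           (c^2 + c^3 + (c - 1) * x^2) / (c^2 + x^2)^2) (at x)"
proof -
  have pos: "c^2 + x^2 > 0"
    using assms by (simp add: add_pos_nonneg)
  have "((\<lambda>x. arctan (x/c)) has_real_derivative c / (c^2 + x^2)) (at x)"
    using assms pos by (auto intro!: derivative_eq_intros simp: field_simps power2_eq_square)
  moreover have "((\<lambda>x. x / (c^2 + x^2)) has_real_derivative (c^2 - x^2) / (c^2 + x^2)^2) (at x)"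
    using pos by (auto intro!: derivative_eq_intros simp: field_simps power2_eq_square)
  ultimately have "((\<lambda>x. arctan (x/c) + x / (c^2 + x^2)) has_real_derivative
      c / (c^2 + x^2) + (c^2 - x^2) / (c^2 + x^2)^2) (at x)"
    by (intro derivative_intros)
  moreover have "c / D + (c^2 - x^2) / D^2 = (c * D + c^2 - x^2) / D^2" if "D > 0" for D :: real
    using that by (simp add: field_simps power2_eq_square)
  moreover have "c * (c^2 + x^2) + c^2 - x^2 = c^2 + c^3 + (c - 1) * x^2"
    by (simp add: algebra_simps power3_eq_cube power2_eq_square)
  ultimately show ?thesis
    using pos by simp
qed

lemma convex_on_arctan_potential:
  assumes "c \<ge> 1"
  shows "convex_on UNIV (arctan_potential c)"
proof (rule f''_ge0_imp_convex[OF convex_UNIV])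
  show "(arctan_potential c has_real_derivative arctan (x/c) + x / (c^2 + x^2)) (at x)" for x
    using assms by (simp add: arctan_potential_has_derivative)
  show "((\<lambda>x. arctan (x/c) + x / (c^2 + x^2)) has_real_derivative
          (c^2 + c^3 + (c - 1) * x^2) / (c^2 + x^2)^2) (at x)" for x
    using assms by (simp add: arctan_potential_deriv_has_derivative)
  show "0 \<le> (c^2 + c^3 + (c - 1) * x^2) / (c^2 + x^2)^2" for x
    using assms by (intro divide_nonneg_nonneg) auto
qed

lemma convex_on_reflect:
  fixes f :: "'a::real_vector \<Rightarrow> real"
  assumes "convex_on UNIV f"
  shows "convex_on UNIV (\<lambda>x. f (s - x))"
proof (rule convex_onI)
  fix t :: real and x y :: 'a
  assume t: "0 < t" "t < 1"
  have "s - ((1 - t) *\<^sub>R x + t *\<^sub>R y) = (1 - t) *\<^sub>R (s - x) + t *\<^sub>R (s - y)"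
    by (simp add: algebra_simps)
  then show "f (s - ((1 - t) *\<^sub>R x + t *\<^sub>R y)) \<le> (1 - t) * f (s - x) + t * f (s - y)"
    using convex_onD[OF assms, of t "s - x" "s - y"] t by simp
qed simp

lemma log_concave_mult_exp_neg:
  assumes "\<gamma> > 0" and "convex_on UNIV f"
  shows "log_concave (\<lambda>x. \<gamma> * exp (- f x))"
proof -
  have "concave_on UNIV (\<lambda>x. ln \<gamma> - f x)"
    using assms(2) by (intro concave_on_diff) (simp_all add: concave_on_const)
  then show ?thesis
    using assms(1) by (simp add: log_concave_def ln_mult)
qed

lemma powr_mult_exp_eq_exp_arctan_potential:
  assumes "c > 0"
  shows "((c/2)^2 + (x/2)^2) powr ((c - 1)/2) * exp (- x * arctan (x / c))
           = exp (- arctan_potential c x)"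
proof -
  have "(c/2)^2 + (x/2)^2 > 0"
    using assms by (simp add: add_pos_nonneg)
  then show ?thesis
    using assms by (simp add: powr_def arctan_potential_def flip: exp_add)
qed

theorem lemma1:
  fixes a b s \<gamma> :: real
  assumes "a > 0" and "b > 0" and "min a b \<ge> 1" and "\<gamma> > 0"
  shows "log_concave (\<lambda>x. \<gamma> * ((a/2)^2 + (x/2)^2) powr ((a - 1)/2)
            * ((b/2)^2 + ((s - x)/2)^2) powr ((b - 1)/2)
            * exp (- x * arctan (x / a) - (s - x) * arctan ((s - x) / b)))"
proof -
  have factorization: "\<gamma> * ((a/2)^2 + (x/2)^2) powr ((a - 1)/2)
            * ((b/2)^2 + ((s - x)/2)^2) powr ((b - 1)/2)
            * exp (- x * arctan (x / a) - (s - x) * arctan ((s - x) / b))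
        = \<gamma> * exp (- (arctan_potential a x + arctan_potential b (s - x)))" for x
  proof -
    have "\<gamma> * ((a/2)^2 + (x/2)^2) powr ((a - 1)/2)
            * ((b/2)^2 + ((s - x)/2)^2) powr ((b - 1)/2)
            * exp (- x * arctan (x / a) - (s - x) * arctan ((s - x) / b))
        = \<gamma> * (((a/2)^2 + (x/2)^2) powr ((a - 1)/2) * exp (- x * arctan (x / a)))
            * (((b/2)^2 + ((s - x)/2)^2) powr ((b - 1)/2) * exp (- (s - x) * arctan ((s - x) / b)))"
      by (simp add: algebra_simps flip: exp_add)
    also have "\<dots> = \<gamma> * exp (- arctan_potential a x) * exp (- arctan_potential b (s - x))"
      using assms(1,2) by (simp only: powr_mult_exp_eq_exp_arctan_potential)
    finally show ?thesis
      by (simp add: mult.assoc flip: exp_add)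
  qed
  have "convex_on UNIV (\<lambda>x. arctan_potential a x + arctan_potential b (s - x))"
    using assms(3) by (intro convex_on_add convex_on_arctan_potential convex_on_reflect) simp_all
  then show ?thesis
    unfolding factorization by (rule log_concave_mult_exp_neg[OF assms(4)])
qed

end
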